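(* Let $\sigma$ be a nonempty finite sequence of nonnegative integers avoiding both $010$ and $110$. Let $q$ be the largest value occurring at least twice in $\sigma$, or $q=0$ if there is none, and let $r$ be the number of distinct values of $\sigma$ that are $\geqslant q$. Then $\mathrm{forb}(\sigma,\{010,110\})=q+r$.
   Context: A sequence contains a pattern $p$ if some subsequence is order-isomorphic to $p$; otherwise it avoids $p$. Avoiding $010$: no $i<j<l$ with $\sigma_i=\sigma_l<\sigma_j$. Avoiding $110$: no $i<j<l$ with $\sigma_i=\sigma_j>\sigma_l$. For a sequence $\sigma$ avoiding a set of patterns $P$, a value $v\in\{0,\dots,\max(\sigma)\}$ is forbidden if the sequence $\sigma$ followed by $M$ and then $v$ contains some pattern of $P$, where $M>\max(\sigma)$; $\mathrm{forb}(\sigma,P)$ is the number of forbidden values. *)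

theory Defs
  imports Main "HOL-Library.Sublist"
begin

definition order_iso :: "nat list \<Rightarrow> nat list \<Rightarrow> bool" where
  "order_iso a b \<longleftrightarrow> length a = length b \<and>
     (\<forall>i<length a. \<forall>j<length a. (a ! i < a ! j \<longleftrightarrow> b ! i < b ! j))"

definition contains :: "nat list \<Rightarrow> nat list \<Rightarrow> bool" where
  "contains s p \<longleftrightarrow> (\<exists>t. subseq t s \<and> order_iso t p)"

definition avoids :: "nat list \<Rightarrow> nat list set \<Rightarrow> bool" where
  "avoids s P \<longleftrightarrow> (\<forall>p\<in>P. \<not> contains s p)"

text \<open>Forbidden values: v in {0..max s} such that s followed by M and then v
  contains some pattern of P, with M > max s (we take M = max s + 1;
  containment only depends on relative order, so the choice is irrelevant).\<close>
definition forbidden :: "nat list \<Rightarrow> nat list set \<Rightarrow> nat set" where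
  "forbidden s P = {v. v \<le> Max (set s) \<and>
      (\<exists>p\<in>P. contains (s @ [Suc (Max (set s)), v]) p)}"

definition forb :: "nat list \<Rightarrow> nat list set \<Rightarrow> nat" where
  "forb s P = card (forbidden s P)"

definition max_repeated :: "nat list \<Rightarrow> nat" where
  "max_repeated s = (if \<exists>v. count_list s v \<ge> 2
      then Max {v. count_list s v \<ge> 2} else 0)"

end

theory Submission
  imports Defs
begin

text \<open>Since \<sigma> avoids both patterns and M can only
  play the role of the middle 1 of 010, an occurrence of 010 must be of the form a M v with a = v,
  so it exists iff v occurs in \<sigma>; an occurrence of 110 must be a a v with a repeated value a > v,
  so it exists iff v < q. The forbidden values are therefore the disjoint union of
  {0, \<dots>, q - 1} and the values of \<sigma> that are \<ge> q.\<close>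

lemma all_less_length_three_iff:
  "(\<forall>i<length [a, b, c]. P i) \<longleftrightarrow> P 0 \<and> P 1 \<and> P 2"
  by (auto simp: less_Suc_eq numeral_2_eq_2)

lemma order_iso_010_iff: "order_iso [a, b, c] [0, 1, 0] \<longleftrightarrow> a = c \<and> a < b"
  unfolding order_iso_def all_less_length_three_iff by auto

lemma order_iso_110_iff: "order_iso [a, b, c] [1, 1, 0] \<longleftrightarrow> a = b \<and> c < a"
  unfolding order_iso_def all_less_length_three_iff by auto

lemma contains_length_three_iff:
  assumes "length p = 3"
  shows "contains s p \<longleftrightarrow> (\<exists>a b c. subseq [a, b, c] s \<and> order_iso [a, b, c] p)"
proof -
  have "length t = 3 \<Longrightarrow> \<exists>a b c. t = [a, b, c]" for t :: "nat list"
    by (auto simp: length_Suc_conv numeral_3_eq_3)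
  with assms show ?thesis
    unfolding contains_def by (metis order_iso_def)
qed

lemma contains_010_iff: "contains s [0, 1, 0] \<longleftrightarrow> (\<exists>a b. subseq [a, b, a] s \<and> a < b)"
  using contains_length_three_iff[of "[0, 1, 0]" s] unfolding order_iso_010_iff by auto

lemma contains_110_iff: "contains s [1, 1, 0] \<longleftrightarrow> (\<exists>a c. subseq [a, a, c] s \<and> c < a)"
  using contains_length_three_iff[of "[1, 1, 0]" s] unfolding order_iso_110_iff by auto

lemma count_list_ge_two_iff_subseq: "2 \<le> count_list xs x \<longleftrightarrow> subseq [x, x] xs"
proof (induction xs)
  case (Cons y xs)
  have "1 \<le> count_list xs x \<longleftrightarrow> x \<in> set xs"
    by (metis count_list_0_iff less_one not_less)
  with Cons show ?case
    by (auto simp: subseq_singleton_left)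
qed simp

lemma subseq_singleton_right_iff: "subseq xs [x] \<longleftrightarrow> xs = [] \<or> xs = [x]"
  by (cases xs) (auto split: if_splits)

lemma subseq_two_iff: "subseq xs [x, y] \<longleftrightarrow> xs = [] \<or> xs = [x] \<or> xs = [y] \<or> xs = [x, y]"
proof
  assume "subseq xs [x, y]"
  then obtain xs1 xs2 where "xs = xs1 @ xs2" "subseq xs1 [x]" "subseq xs2 [y]"
    using subseq_append_iff[of xs "[x]" "[y]"] by auto
  then show "xs = [] \<or> xs = [x] \<or> xs = [y] \<or> xs = [x, y]"
    by (auto simp: subseq_singleton_right_iff)
qed (auto simp: subseq_singleton_left)

lemma subseq_three_append_two_iff:
  "subseq [a, b, c] (s @ [x, y]) \<longleftrightarrow>
     subseq [a, b, c] s \<or> (subseq [a, b] s \<and> (c = x \<or> c = y)) \<or> (a \<in> set s \<and> b = x \<and> c = y)"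
proof
  assume "subseq [a, b, c] (s @ [x, y])"
  then obtain t1 t2 where "[a, b, c] = t1 @ t2" "subseq t1 s" "subseq t2 [x, y]"
    by (auto elim: subseq_appendE)
  then show "subseq [a, b, c] s \<or> (subseq [a, b] s \<and> (c = x \<or> c = y)) \<or> (a \<in> set s \<and> b = x \<and> c = y)"
    by (auto simp: subseq_two_iff subseq_singleton_left)
next
  show "subseq [a, b, c] s \<or> (subseq [a, b] s \<and> (c = x \<or> c = y)) \<or> (a \<in> set s \<and> b = x \<and> c = y)
    \<Longrightarrow> subseq [a, b, c] (s @ [x, y])"
    using list_emb_append_mono[of "(=)" "[a, b]" s "[c]" "[x, y]"]
      list_emb_append_mono[of "(=)" "[a]" s "[x, y]" "[x, y]"]
    by (auto simp: subseq_singleton_left)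
qed

lemma subseq_Cons_imp_in_set: "subseq (x # xs) s \<Longrightarrow> x \<in> set s"
  by (auto elim: list_emb_set[where x = x])

lemma contains_010_append_above_iff:
  assumes above: "\<forall>x\<in>set s. x < M"
  shows "contains (s @ [M, v]) [0, 1, 0] \<longleftrightarrow> contains s [0, 1, 0] \<or> v \<in> set s"
proof
  assume "contains (s @ [M, v]) [0, 1, 0]"
  then obtain a b where "subseq [a, b, a] (s @ [M, v])" "a < b"
    unfolding contains_010_iff by blast
  then consider "contains s [0, 1, 0]" | "a \<in> set s" "a = M \<or> a = v"
    unfolding subseq_three_append_two_iff contains_010_iff by (blast dest: subseq_Cons_imp_in_set)
  then show "contains s [0, 1, 0] \<or> v \<in> set s"
    by cases (use above in auto)
next
  assume "contains s [0, 1, 0] \<or> v \<in> set s"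
  then show "contains (s @ [M, v]) [0, 1, 0]"
    using above unfolding contains_010_iff subseq_three_append_two_iff by blast
qed

lemma contains_110_append_above_iff:
  assumes above: "\<forall>x\<in>set s. x < M"
  shows "contains (s @ [M, v]) [1, 1, 0] \<longleftrightarrow>
    contains s [1, 1, 0] \<or> (\<exists>w. 2 \<le> count_list s w \<and> v < w)"
proof
  assume "contains (s @ [M, v]) [1, 1, 0]"
  then obtain a c where "subseq [a, a, c] (s @ [M, v])" "c < a"
    unfolding contains_110_iff by blast
  then consider "contains s [1, 1, 0]" | "subseq [a, a] s" "c = M \<or> c = v" "c < a" | "a \<in> set s" "a = M"
    unfolding subseq_three_append_two_iff contains_110_iff by blast
  then show "contains s [1, 1, 0] \<or> (\<exists>w. 2 \<le> count_list s w \<and> v < w)"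
    by cases (use above subseq_Cons_imp_in_set count_list_ge_two_iff_subseq in force)+
next
  assume "contains s [1, 1, 0] \<or> (\<exists>w. 2 \<le> count_list s w \<and> v < w)"
  then show "contains (s @ [M, v]) [1, 1, 0]"
    unfolding contains_110_iff subseq_three_append_two_iff count_list_ge_two_iff_subseq by blast
qed

lemma less_max_repeated_iff:
  "v < max_repeated s \<longleftrightarrow> (\<exists>w. 2 \<le> count_list s w \<and> v < w)"
proof -
  have "{w. 2 \<le> count_list s w} \<subseteq> set s"
    by (auto simp: count_list_ge_two_iff_subseq dest: subseq_Cons_imp_in_set)
  then have "finite {w. 2 \<le> count_list s w}"
    using finite_subset by blast
  then show ?thesis
    unfolding max_repeated_def by (auto simp: Max_gr_iff)
qed

lemma max_repeated_le_Max:
  assumes "s \<noteq> []"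
  shows "max_repeated s \<le> Max (set s)"
proof (cases "max_repeated s = 0")
  case False
  then obtain w where "2 \<le> count_list s w" "max_repeated s - 1 < w"
    using less_max_repeated_iff[of "max_repeated s - 1" s] by auto
  then have "w \<in> set s"
    by (auto simp: count_list_ge_two_iff_subseq dest: subseq_Cons_imp_in_set)
  then have "w \<le> Max (set s)"
    by simp
  with False \<open>max_repeated s - 1 < w\<close> show ?thesis
    by linarith
qed simp

lemma forbidden_010_110:
  assumes "s \<noteq> []" and "avoids s {[0, 1, 0], [1, 1, 0]}"
  shows "forbidden s {[0, 1, 0], [1, 1, 0]} = {..<max_repeated s} \<union> {v \<in> set s. max_repeated s \<le> v}"
proof -
  have above: "\<forall>x\<in>set s. x < Suc (Max (set s))"
    by (simp add: le_imp_less_Suc)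
  have "\<not> contains s [0, 1, 0]" "\<not> contains s [1, 1, 0]"
    using assms(2) unfolding avoids_def by auto
  then have "(\<exists>p\<in>{[0, 1, 0], [1, 1, 0]}. contains (s @ [Suc (Max (set s)), v]) p) \<longleftrightarrow>
      v \<in> set s \<or> v < max_repeated s" for v
    unfolding bex_simps contains_010_append_above_iff[OF above] contains_110_append_above_iff[OF above]
      less_max_repeated_iff by blast
  then have "forbidden s {[0, 1, 0], [1, 1, 0]} =
      {v. v \<le> Max (set s) \<and> (v \<in> set s \<or> v < max_repeated s)}"
    unfolding forbidden_def by simp
  also have "\<dots> = {..<max_repeated s} \<union> {v \<in> set s. max_repeated s \<le> v}"
    using max_repeated_le_Max[OF assms(1)] by force
  finally show ?thesis .
qed

theorem mainTheorem11:
  fixes \<sigma> :: "nat list"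
  assumes "\<sigma> \<noteq> []"
    and "avoids \<sigma> {[0,1,0], [1,1,0]}"
  shows "forb \<sigma> {[0,1,0], [1,1,0]} =
         max_repeated \<sigma> + card {v \<in> set \<sigma>. v \<ge> max_repeated \<sigma>}"
proof -
  have "card ({..<max_repeated \<sigma>} \<union> {v \<in> set \<sigma>. max_repeated \<sigma> \<le> v}) =
      card {..<max_repeated \<sigma>} + card {v \<in> set \<sigma>. max_repeated \<sigma> \<le> v}"
    by (rule card_Un_disjoint) auto
  then show ?thesis
    unfolding forb_def forbidden_010_110[OF assms] by simp
qed

end
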